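(* Let $\mathcal O$ be a regular family of $\sigma$-trees, let $\mathbf A$ be a $\sigma$-tree and $\phi:\mathbf A\to\mathbf D(\mathcal O)$ a homomorphism. Then for every $a\in V(\mathbf A)$, $(\mathbf A,a)\in\phi(a)$.
   Context: A type $\sigma$ is a finite set of relation symbols with arities; a $\sigma$-structure $\mathbf A$ is a finite set $V(\mathbf A)$ with an $r$-ary relation $R(\mathbf A)$ for each $R$ of arity $r$; homomorphisms are relation-preserving maps. $\mathrm{Inc}(\mathbf A)$ is the bipartite multigraph with parts $V(\mathbf A)$ and the blocks $(R,(x_1,\dots,x_r))$, $(x_1,\dots,x_r)\in R(\mathbf A)$, with one edge joining $x_i$ to the block for each $i$. $\mathbf A$ is a $\sigma$-forest if $\mathrm{Inc}(\mathbf A)$ has no cycles or parallel edges, a $\sigma$-tree if moreover connected. $\mathbb F,\mathbb T$: isomorphism classes of $\sigma$-forests/trees; $\mathbb F_{\mathrm r},\mathbb T_{\mathrm r}$: rooted ones $(\mathbf A,a)$. $(\mathbf A,a)+(\mathbf B,b)$: disjoint union with $a,b$ identified as new root; $[(\mathbf A,a)]$ forgets the root; $\mathbf T_0$ is the one-vertex rooted tree with empty relations. For $\mathcal O\subseteq\mathbb F$, $\mathcal O-(\mathbf A,a)=\{(\mathbf B,b)\in\mathbb F_{\mathrm r}:[(\mathbf A,a)+(\mathbf B,b)]\in\mathcal O\}$; $\mathcal O$ is regular if there are finitely many distinct such sets. Concatenation: $\mathbf C(R,(\mathbf A_1,x_1),\dots,(\mathbf A_r,x_r))$ is the disjoint union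 of the $\mathbf A_i$ with $(x_1,\dots,x_r)$ added to $R$. $\mathbf D(\mathcal O)$ has as vertices the sets $\mathcal V\subseteq\mathbb T_{\mathrm r}$ with (i) $\mathbf T_0\in\mathcal V$; (ii) $(\mathbf A,a)\in\mathcal V$ implies $\mathbf A\notin\mathcal O$; (iii) $\mathcal V=\mathbb T_{\mathrm r}\setminus\bigcup_{(\mathbf A,a)\in\mathcal H}(\mathcal O-(\mathbf A,a))$ for some family $\mathcal H$ of rooted trees. For $R$ of arity $r$, $(\mathcal V_1,\dots,\mathcal V_r)\in R(\mathbf D(\mathcal O))$ iff for all $(\mathbf A_i,a_i)\in\mathcal V_i$, with $\mathbf T=\mathbf C(R,(\mathbf A_1,a_1),\dots,(\mathbf A_r,a_r))$, $(\mathbf T,a_j)\in\mathcal V_j$ for all $j$. *)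

theory Defs
  imports Main
begin

text \<open>A type sigma is modelled by a finite type 'r of relation symbols together with an
  arity function ar. A sigma-structure with vertices of type 'a is a pair (V, Rel) where
  V is the vertex set and Rel R is the set of tuples (as lists) in relation R.\<close>

type_synonym ('a, 'r) struct = "'a set \<times> ('r \<Rightarrow> 'a list set)"

definition wf_struct :: "('r \<Rightarrow> nat) \<Rightarrow> ('a, 'r) struct \<Rightarrow> bool" where
  "wf_struct ar A \<longleftrightarrow> finite (fst A) \<and> (\<forall>R. finite (snd A R)) \<and>
     (\<forall>R t. t \<in> snd A R \<longrightarrow> length t = ar R \<and> set t \<subseteq> fst A)"

text \<open>Incidence graph: nodes are Inl v (vertices) and Inr (R, t) (blocks); a vertex is
  joined to a block iff it occurs in the tuple. Parallel edges correspond to repeated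
  entries in a tuple and are excluded separately.\<close>

definition inc_nodes :: "('a, 'r) struct \<Rightarrow> ('a + ('r \<times> 'a list)) set" where
  "inc_nodes A = Inl ` fst A \<union> Inr ` {(R, t). t \<in> snd A R}"

definition inc_adj :: "('a, 'r) struct \<Rightarrow> ('a + ('r \<times> 'a list)) \<Rightarrow> ('a + ('r \<times> 'a list)) \<Rightarrow> bool" where
  "inc_adj A u w \<longleftrightarrow> (\<exists>v R t. t \<in> snd A R \<and> v \<in> set t \<and>
      ((u = Inl v \<and> w = Inr (R, t)) \<or> (u = Inr (R, t) \<and> w = Inl v)))"

definition inc_has_cycle :: "('a, 'r) struct \<Rightarrow> bool" where
  "inc_has_cycle A \<longleftrightarrow> (\<exists>cs. length cs \<ge> 3 \<and> distinct cs \<and>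
      (\<forall>i < length cs. inc_adj A (cs ! i) (cs ! ((i + 1) mod length cs))))"

definition inc_parallel :: "('a, 'r) struct \<Rightarrow> bool" where
  "inc_parallel A \<longleftrightarrow> (\<exists>R t. t \<in> snd A R \<and> \<not> distinct t)"

definition inc_connected :: "('a, 'r) struct \<Rightarrow> bool" where
  "inc_connected A \<longleftrightarrow> (\<forall>u \<in> inc_nodes A. \<forall>w \<in> inc_nodes A.
      (u, w) \<in> {(x, y). inc_adj A x y}\<^sup>*)"

definition is_forest :: "('r \<Rightarrow> nat) \<Rightarrow> ('a, 'r) struct \<Rightarrow> bool" where
  "is_forest ar A \<longleftrightarrow> wf_struct ar A \<and> \<not> inc_parallel A \<and> \<not> inc_has_cycle A"

definition is_tree :: "('r \<Rightarrow> nat) \<Rightarrow> ('a, 'r) struct \<Rightarrow> bool" where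
  "is_tree ar A \<longleftrightarrow> is_forest ar A \<and> fst A \<noteq> {} \<and> inc_connected A"

definition is_rforest :: "('r \<Rightarrow> nat) \<Rightarrow> ('a, 'r) struct \<times> 'a \<Rightarrow> bool" where
  "is_rforest ar X \<longleftrightarrow> is_forest ar (fst X) \<and> snd X \<in> fst (fst X)"

definition is_rtree :: "('r \<Rightarrow> nat) \<Rightarrow> ('a, 'r) struct \<times> 'a \<Rightarrow> bool" where
  "is_rtree ar X \<longleftrightarrow> is_tree ar (fst X) \<and> snd X \<in> fst (fst X)"

definition iso :: "('a, 'r) struct \<Rightarrow> ('b, 'r) struct \<Rightarrow> bool" where
  "iso A B \<longleftrightarrow> (\<exists>f. bij_betw f (fst A) (fst B) \<and> (\<forall>R. snd B R = map f ` snd A R))"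

definition riso :: "('a, 'r) struct \<times> 'a \<Rightarrow> ('b, 'r) struct \<times> 'b \<Rightarrow> bool" where
  "riso X Y \<longleftrightarrow> (\<exists>f. bij_betw f (fst (fst X)) (fst (fst Y)) \<and>
      (\<forall>R. snd (fst Y) R = map f ` snd (fst X) R) \<and> f (snd X) = snd Y)"

text \<open>Isomorphism classes are represented by concrete structures on nat.\<close>

definition in_cls :: "(nat, 'r) struct set \<Rightarrow> ('a, 'r) struct \<Rightarrow> bool" where
  "in_cls Ob A \<longleftrightarrow> (\<exists>B \<in> Ob. iso A B)"

definition mem_iso :: "('a, 'r) struct \<times> 'a \<Rightarrow> ((nat, 'r) struct \<times> nat) set \<Rightarrow> bool" where
  "mem_iso X F \<longleftrightarrow> (\<exists>Y \<in> F. riso X Y)"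

text \<open>(A,a) + (B,b): disjoint union with a and b identified, rooted at the identified vertex.\<close>

definition glue :: "('a, 'r) struct \<times> 'a \<Rightarrow> ('b, 'r) struct \<times> 'b \<Rightarrow> ('a + 'b, 'r) struct \<times> ('a + 'b)" where
  "glue X Y = (let A = fst X; a = snd X; B = fst Y; b = snd Y;
                   g = (\<lambda>x. if x = b then Inl a else Inr x)
               in ((Inl ` fst A \<union> g ` fst B,
                    \<lambda>R. map Inl ` snd A R \<union> map g ` snd B R), Inl a))"

definition residual :: "('r \<Rightarrow> nat) \<Rightarrow> (nat, 'r) struct set \<Rightarrow> (nat, 'r) struct \<times> nat
    \<Rightarrow> ((nat, 'r) struct \<times> nat) set" where
  "residual ar Ob X = {Y. is_rforest ar Y \<and> in_cls Ob (fst (glue X Y))}"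

definition regular :: "('r \<Rightarrow> nat) \<Rightarrow> (nat, 'r) struct set \<Rightarrow> bool" where
  "regular ar Ob \<longleftrightarrow> finite (residual ar Ob ` {X. is_rforest ar X})"

definition rtrees :: "('r \<Rightarrow> nat) \<Rightarrow> ((nat, 'r) struct \<times> nat) set" where
  "rtrees ar = {X. is_rtree ar X}"

definition T0 :: "(nat, 'r) struct \<times> nat" where
  "T0 = (({0}, \<lambda>R. {}), 0)"

text \<open>Concatenation C(R,(A_1,x_1),...,(A_r,x_r)); vertex (i,v) is the copy of v in A_i
  (indices 0-based).\<close>

definition concat_s :: "'r \<Rightarrow> (('a, 'r) struct \<times> 'a) list \<Rightarrow> (nat \<times> 'a, 'r) struct" where
  "concat_s R Xs =
     ({(i, v). i < length Xs \<and> v \<in> fst (fst (Xs ! i))},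
      \<lambda>S. {map (Pair i) t | i t. i < length Xs \<and> t \<in> snd (fst (Xs ! i)) S} \<union>
          (if S = R then {map (\<lambda>i. (i, snd (Xs ! i))) [0..<length Xs]} else {}))"

definition D_vertex :: "('r \<Rightarrow> nat) \<Rightarrow> (nat, 'r) struct set \<Rightarrow> ((nat, 'r) struct \<times> nat) set \<Rightarrow> bool" where
  "D_vertex ar Ob V \<longleftrightarrow> T0 \<in> V \<and> (\<forall>X \<in> V. \<not> in_cls Ob (fst X)) \<and>
     (\<exists>H \<subseteq> rtrees ar. V = rtrees ar - \<Union> (residual ar Ob ` H))"

definition D_rel :: "('r \<Rightarrow> nat) \<Rightarrow> (nat, 'r) struct set \<Rightarrow> 'r
    \<Rightarrow> ((nat, 'r) struct \<times> nat) set list \<Rightarrow> bool" where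
  "D_rel ar Ob R Vs \<longleftrightarrow> length Vs = ar R \<and> (\<forall>V \<in> set Vs. D_vertex ar Ob V) \<and>
     (\<forall>Xs. length Xs = length Vs \<longrightarrow> (\<forall>i < length Vs. Xs ! i \<in> Vs ! i) \<longrightarrow>
        (\<forall>j < length Vs. mem_iso (concat_s R Xs, (j, snd (Xs ! j))) (Vs ! j)))"

definition Dstr :: "('r \<Rightarrow> nat) \<Rightarrow> (nat, 'r) struct set \<Rightarrow> (((nat, 'r) struct \<times> nat) set, 'r) struct" where
  "Dstr ar Ob = ({V. D_vertex ar Ob V}, \<lambda>R. {Vs. D_rel ar Ob R Vs})"

definition hom :: "('a, 'r) struct \<Rightarrow> ('b, 'r) struct \<Rightarrow> ('a \<Rightarrow> 'b) \<Rightarrow> bool" where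
  "hom A B f \<longleftrightarrow> (\<forall>x \<in> fst A. f x \<in> fst B) \<and> (\<forall>R t. t \<in> snd A R \<longrightarrow> map f t \<in> snd B R)"

end

theory Submission
  imports Defs "HOL-Library.Transitive_Closure_Table" "HOL-Library.Disjoint_Sets"
begin

text \<open>Induction on the number of tuples of the tree A. With no tuples, (A, a) is T0, which
  every vertex of D(O) contains. Otherwise a lies in some tuple t of R(A). Deleting the block
  (R, t) from the incidence graph splits A into branches, one at each entry t_i, and
  acyclicity makes them pairwise disjoint; so A is the concatenation C(R, (B_1, t_1), ...,
  (B_r, t_r)) of its branches. By induction (B_i, t_i) lies in phi(t_i), and since
  (phi(t_1), ..., phi(t_r)) is in R(D(O)), the concatenation rooted at t_j = a lies in
  phi(a).\<close>

lemma symp_inc_adj: "symp (inc_adj A)"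
  unfolding symp_def inc_adj_def by blast

lemma inc_connected_rtranclp:
  "inc_connected A \<Longrightarrow> u \<in> inc_nodes A \<Longrightarrow> w \<in> inc_nodes A \<Longrightarrow> (inc_adj A)\<^sup>*\<^sup>* u w"
  unfolding inc_connected_def rtranclp_rtrancl_eq by blast

lemma wf_struct_tuple_nth:
  "wf_struct ar A \<Longrightarrow> t \<in> snd A R \<Longrightarrow> i < length t \<Longrightarrow> t ! i \<in> fst A"
  unfolding wf_struct_def by (meson nth_mem subsetD)

lemma inc_adj_nodes: "wf_struct ar A \<Longrightarrow> inc_adj A u w \<Longrightarrow> w \<in> inc_nodes A"
  unfolding wf_struct_def inc_adj_def inc_nodes_def by blast

lemma inc_has_cycle_mono:
  assumes "\<And>S. snd B S \<subseteq> snd A S" and "inc_has_cycle B"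
  shows "inc_has_cycle A"
proof -
  have "inc_adj B u w \<Longrightarrow> inc_adj A u w" for u w
    using assms(1) unfolding inc_adj_def by blast
  then show ?thesis
    using assms(2) unfolding inc_has_cycle_def by blast
qed

definition inc_adj_minus :: "('a, 'r) struct \<Rightarrow> 'r \<Rightarrow> 'a list
    \<Rightarrow> 'a + 'r \<times> 'a list \<Rightarrow> 'a + 'r \<times> 'a list \<Rightarrow> bool" where
  "inc_adj_minus A R t u w \<longleftrightarrow> inc_adj A u w \<and> u \<noteq> Inr (R, t) \<and> w \<noteq> Inr (R, t)"

lemma symp_inc_adj_minus: "symp (inc_adj_minus A R t)"
  unfolding symp_def inc_adj_minus_def inc_adj_def by blast

lemma inc_adj_minus_rtranclp_sym:
  "(inc_adj_minus A R t)\<^sup>*\<^sup>* u w \<Longrightarrow> (inc_adj_minus A R t)\<^sup>*\<^sup>* w u"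
  using symp_rtranclp[OF symp_inc_adj_minus] by (rule sympD)

lemma inc_adj_minus_rtranclp_avoids:
  "(inc_adj_minus A R t)\<^sup>*\<^sup>* u w \<Longrightarrow> u \<noteq> Inr (R, t) \<Longrightarrow> w \<noteq> Inr (R, t)"
  by (induction rule: rtranclp_induct) (auto simp: inc_adj_minus_def)

text \<open>Two distinct entries of a block are joined by a simple path avoiding the block;
  closing it up through the block yields a cycle of the incidence graph.\<close>

lemma forest_block_separates:
  assumes F: "is_forest ar A" and tin: "t \<in> snd A R"
    and ik: "i < length t" "k < length t"
    and conn: "(inc_adj_minus A R t)\<^sup>*\<^sup>* (Inl (t ! i)) (Inl (t ! k))"
  shows "i = k"
proof (rule ccontr)
  assume "i \<noteq> k"
  moreover have "distinct t"
    using F tin unfolding is_forest_def inc_parallel_def by blast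
  ultimately have ne: "t ! i \<noteq> t ! k"
    using ik nth_eq_iff_index_eq by blast
  obtain xs0 where "rtrancl_path (inc_adj_minus A R t) (Inl (t ! i)) xs0 (Inl (t ! k))"
    using conn rtranclp_eq_rtrancl_path by metis
  then obtain xs where path: "rtrancl_path (inc_adj_minus A R t) (Inl (t ! i)) xs (Inl (t ! k))"
    and dist: "distinct (Inl (t ! i) # xs)"
    by (rule rtrancl_path_distinct)
  have xs: "xs \<noteq> []"
    using path ne by (auto elim: rtrancl_path.cases)
  have last_xs: "last xs = Inl (t ! k)"
    using rtrancl_path_last[OF path xs] .
  have "Inr (R, t) \<notin> set xs"
    using rtrancl_path_Range[OF path] by (fastforce simp: inc_adj_minus_def)
  define cs where "cs = Inl (t ! i) # xs @ [Inr (R, t)]"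
  have "inc_has_cycle A"
    unfolding inc_has_cycle_def
  proof (intro exI[of _ cs] conjI allI impI)
    show "3 \<le> length cs" "distinct cs"
      using xs dist \<open>Inr (R, t) \<notin> set xs\<close> by (auto simp: cs_def Suc_le_eq)
    fix m assume m: "m < length cs"
    consider "m < length xs" | "m = length xs" | "m = Suc (length xs)"
      using m by (force simp: cs_def)
    then show "inc_adj A (cs ! m) (cs ! ((m + 1) mod length cs))"
    proof cases
      case 1
      then have "cs ! m = (Inl (t ! i) # xs) ! m" "cs ! ((m + 1) mod length cs) = xs ! m"
        by (simp_all add: cs_def nth_append flip: append_Cons)
      then show ?thesis
        using rtrancl_path_nth[OF path 1] by (simp add: inc_adj_minus_def)
    next
      case 2
      then have "cs ! m = Inl (t ! k)"
        using xs last_xs by (simp add: cs_def nth_append last_conv_nth)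
      then show ?thesis
        using 2 tin ik by (auto simp: cs_def inc_adj_def)
    next
      case 3
      then show ?thesis
        using tin ik by (auto simp: cs_def inc_adj_def)
    qed
  qed
  then show False
    using F unfolding is_forest_def by blast
qed

lemma forest_branches_disjoint:
  assumes "is_forest ar A" "t \<in> snd A R" "i < length t" "k < length t"
    and "(inc_adj_minus A R t)\<^sup>*\<^sup>* (Inl (t ! i)) u" "(inc_adj_minus A R t)\<^sup>*\<^sup>* (Inl (t ! k)) u"
  shows "i = k"
  using assms forest_block_separates inc_adj_minus_rtranclp_sym rtranclp_trans by metis

lemma tree_branches_cover:
  assumes T: "is_tree ar A" and tin: "t \<in> snd A R"
    and u: "u \<in> inc_nodes A" "u \<noteq> Inr (R, t)"
  shows "\<exists>i < length t. (inc_adj_minus A R t)\<^sup>*\<^sup>* (Inl (t ! i)) u"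
proof -
  have "Inr (R, t) \<in> inc_nodes A"
    using tin by (auto simp: inc_nodes_def)
  then have "(inc_adj A)\<^sup>*\<^sup>* (Inr (R, t)) u"
    using T u inc_connected_rtranclp unfolding is_tree_def by blast
  then have "u = Inr (R, t) \<or> (\<exists>i < length t. (inc_adj_minus A R t)\<^sup>*\<^sup>* (Inl (t ! i)) u)"
  proof (induction rule: rtranclp_induct)
    case (step y z)
    from step.IH show ?case
    proof
      assume "y = Inr (R, t)"
      then obtain v where "z = Inl v" "v \<in> set t"
        using \<open>inc_adj A y z\<close> unfolding inc_adj_def by auto
      then show ?thesis
        by (auto simp: in_set_conv_nth)
    next
      assume "\<exists>i < length t. (inc_adj_minus A R t)\<^sup>*\<^sup>* (Inl (t ! i)) y"
      then obtain i where i: "i < length t" "(inc_adj_minus A R t)\<^sup>*\<^sup>* (Inl (t ! i)) y"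
        by blast
      have "y \<noteq> Inr (R, t)"
        using inc_adj_minus_rtranclp_avoids[OF i(2)] by simp
      show ?thesis
      proof (cases "z = Inr (R, t)")
        case False
        with \<open>y \<noteq> Inr (R, t)\<close> have "inc_adj_minus A R t y z"
          using \<open>inc_adj A y z\<close> by (simp add: inc_adj_minus_def)
        then show ?thesis
          using i by (meson rtranclp.rtrancl_into_rtrancl)
      qed simp
    qed
  qed simp
  then show ?thesis
    using u by blast
qed

definition branch :: "('a, 'r) struct \<Rightarrow> 'r \<Rightarrow> 'a list \<Rightarrow> 'a \<Rightarrow> ('a, 'r) struct" where
  "branch A R t x =
     ({v. (inc_adj_minus A R t)\<^sup>*\<^sup>* (Inl x) (Inl v)},
      \<lambda>S. {s \<in> snd A S. (inc_adj_minus A R t)\<^sup>*\<^sup>* (Inl x) (Inr (S, s))})"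

lemma root_in_branch: "x \<in> fst (branch A R t x)"
  by (simp add: branch_def)

lemma branch_tuples_subset: "snd (branch A R t x) S \<subseteq> snd A S"
  by (auto simp: branch_def)

lemma block_not_in_branch: "t \<notin> snd (branch A R t x) R"
  using inc_adj_minus_rtranclp_avoids[of A R t "Inl x" "Inr (R, t)"] by (auto simp: branch_def)

lemma branch_vertices_subset:
  assumes "wf_struct ar A" "x \<in> fst A"
  shows "fst (branch A R t x) \<subseteq> fst A"
proof
  fix v assume "v \<in> fst (branch A R t x)"
  then have "(inc_adj_minus A R t)\<^sup>*\<^sup>* (Inl x) (Inl v)"
    by (simp add: branch_def)
  then show "v \<in> fst A"
    by (cases rule: rtranclp.cases)
      (use assms in \<open>auto simp: inc_adj_minus_def inc_nodes_def dest: inc_adj_nodes\<close>)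
qed

lemma branch_tuple_vertices:
  assumes "s \<in> snd (branch A R t x) S" "v \<in> set s"
  shows "v \<in> fst (branch A R t x)"
proof -
  have reach: "(inc_adj_minus A R t)\<^sup>*\<^sup>* (Inl x) (Inr (S, s))" and s: "s \<in> snd A S"
    using assms(1) by (auto simp: branch_def)
  have "Inr (S, s) \<noteq> Inr (R, t)"
    using inc_adj_minus_rtranclp_avoids[OF reach] by simp
  then have "inc_adj_minus A R t (Inr (S, s)) (Inl v)"
    using s assms(2) by (auto simp: inc_adj_minus_def inc_adj_def)
  then show ?thesis
    using reach by (auto simp: branch_def intro: rtranclp.rtrancl_into_rtrancl)
qed

lemma branch_reach:
  "(inc_adj_minus A R t)\<^sup>*\<^sup>* (Inl x) u \<Longrightarrow> (inc_adj (branch A R t x))\<^sup>*\<^sup>* (Inl x) u"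
proof (induction rule: rtranclp_induct)
  case (step y z)
  have "(inc_adj_minus A R t)\<^sup>*\<^sup>* (Inl x) z"
    using step.hyps by (rule rtranclp.rtrancl_into_rtrancl)
  then have "inc_adj (branch A R t x) y z"
    using step.hyps unfolding inc_adj_minus_def inc_adj_def branch_def by auto
  with step.IH show ?case
    by (rule rtranclp.rtrancl_into_rtrancl)
qed simp

lemma branch_is_tree:
  assumes T: "is_tree ar A" and x: "x \<in> fst A"
  shows "is_tree ar (branch A R t x)"
proof -
  let ?B = "branch A R t x"
  have W: "wf_struct ar A"
    using T by (simp add: is_tree_def is_forest_def)
  have "wf_struct ar ?B"
    using W branch_vertices_subset[OF W x] branch_tuples_subset[of A R t x] branch_tuple_vertices
    unfolding wf_struct_def by (meson finite_subset subsetD subsetI)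
  moreover have "\<not> inc_parallel ?B"
    using T branch_tuples_subset[of A R t x] unfolding is_tree_def is_forest_def inc_parallel_def by blast
  moreover have "\<not> inc_has_cycle ?B"
    using T inc_has_cycle_mono[of ?B A, OF branch_tuples_subset] unfolding is_tree_def is_forest_def by blast
  moreover have "inc_connected ?B"
  proof -
    have "(inc_adj ?B)\<^sup>*\<^sup>* (Inl x) u" if "u \<in> inc_nodes ?B" for u
    proof (rule branch_reach)
      show "(inc_adj_minus A R t)\<^sup>*\<^sup>* (Inl x) u"
        using that unfolding inc_nodes_def branch_def by auto
    qed
    then show ?thesis
      unfolding inc_connected_def rtranclp_rtrancl_eq[symmetric]
      using symp_rtranclp[OF symp_inc_adj] by (meson rtranclp_trans sympD)
  qed
  ultimately show ?thesis
    using root_in_branch[of x A R t] unfolding is_tree_def is_forest_def by blast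
qed

lemma tree_vertex_in_unique_branch:
  assumes T: "is_tree ar A" and tin: "t \<in> snd A R" and v: "v \<in> fst A"
  shows "\<exists>!i. i < length t \<and> v \<in> fst (branch A R t (t ! i))"
proof -
  have "Inl v \<in> inc_nodes A"
    using v by (simp add: inc_nodes_def)
  then obtain i where "i < length t" "(inc_adj_minus A R t)\<^sup>*\<^sup>* (Inl (t ! i)) (Inl v)"
    using tree_branches_cover[OF T tin] by blast
  moreover have "is_forest ar A"
    using T by (simp add: is_tree_def)
  ultimately show ?thesis
    using forest_branches_disjoint[OF _ tin] by (auto simp: branch_def)
qed

lemma tree_tuples_decompose:
  assumes T: "is_tree ar A" and tin: "t \<in> snd A R"
  shows "snd A S = (\<Union>i<length t. snd (branch A R t (t ! i)) S) \<union> (if S = R then {t} else {})"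
proof (intro equalityI subsetI)
  fix s assume s: "s \<in> snd A S"
  show "s \<in> (\<Union>i<length t. snd (branch A R t (t ! i)) S) \<union> (if S = R then {t} else {})"
  proof (cases "S = R \<and> s = t")
    case False
    moreover have "Inr (S, s) \<in> inc_nodes A"
      using s by (auto simp: inc_nodes_def)
    ultimately obtain i where "i < length t" "(inc_adj_minus A R t)\<^sup>*\<^sup>* (Inl (t ! i)) (Inr (S, s))"
      using tree_branches_cover[OF T tin] by blast
    then show ?thesis
      using s by (auto simp: branch_def)
  qed simp
qed (use tin branch_tuples_subset[of A R t] in \<open>auto split: if_splits\<close>)

lemma riso_trans [trans]: "riso X Y \<Longrightarrow> riso Y Z \<Longrightarrow> riso X Z"
  unfolding riso_def
proof (elim exE conjE)
  fix f g
  assume "bij_betw f (fst (fst X)) (fst (fst Y))" "\<forall>R. snd (fst Y) R = map f ` snd (fst X) R"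
    "f (snd X) = snd Y" "bij_betw g (fst (fst Y)) (fst (fst Z))"
    "\<forall>R. snd (fst Z) R = map g ` snd (fst Y) R" "g (snd Y) = snd Z"
  then show "\<exists>h. bij_betw h (fst (fst X)) (fst (fst Z)) \<and>
      (\<forall>R. snd (fst Z) R = map h ` snd (fst X) R) \<and> h (snd X) = snd Z"
    by (intro exI[of _ "g \<circ> f"]) (auto simp: bij_betw_trans image_image)
qed

lemma concat_vertices: "fst (concat_s R Xs) = (\<Union>i<length Xs. Pair i ` fst (fst (Xs ! i)))"
  by (auto simp: concat_s_def)

lemma concat_tuples:
  "snd (concat_s R Xs) S = (\<Union>i<length Xs. map (Pair i) ` snd (fst (Xs ! i)) S) \<union>
     (if S = R then {map (\<lambda>i. (i, snd (Xs ! i))) [0..<length Xs]} else {})"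
  by (auto simp: concat_s_def)

lemma concat_riso_cong:
  assumes len: "length Ys = length Xs" and iso: "\<And>i. i < length Xs \<Longrightarrow> riso (Xs ! i) (Ys ! i)"
    and j: "j < length Xs"
  shows "riso (concat_s R Xs, (j, snd (Xs ! j))) (concat_s R Ys, (j, snd (Ys ! j)))"
proof -
  let ?n = "length Xs"
  obtain g where g: "\<And>i. i < ?n \<Longrightarrow> bij_betw (g i) (fst (fst (Xs ! i))) (fst (fst (Ys ! i)))"
    "\<And>i S. i < ?n \<Longrightarrow> snd (fst (Ys ! i)) S = map (g i) ` snd (fst (Xs ! i)) S"
    "\<And>i. i < ?n \<Longrightarrow> g i (snd (Xs ! i)) = snd (Ys ! i)"
    using iso unfolding riso_def by metis
  define f where "f = (\<lambda>(i, v). (i, g i v))"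
  show ?thesis
    unfolding riso_def fst_conv snd_conv
  proof (intro exI[of _ f] conjI allI)
    have "bij_betw f (Pair i ` fst (fst (Xs ! i))) (Pair i ` fst (fst (Ys ! i)))" if "i < ?n" for i
      using g(1)[OF that] by (auto simp: bij_betw_def inj_on_def f_def image_image)
    then have "bij_betw f (\<Union>i<?n. Pair i ` fst (fst (Xs ! i))) (\<Union>i<?n. Pair i ` fst (fst (Ys ! i)))"
      by (intro bij_betw_UNION_disjoint) (auto simp: disjoint_family_on_def)
    then show "bij_betw f (fst (concat_s R Xs)) (fst (concat_s R Ys))"
      using len by (simp add: concat_vertices)
  next
    fix S
    have "map f ` map (Pair i) ` snd (fst (Xs ! i)) S = map (Pair i) ` snd (fst (Ys ! i)) S"
      if "i < ?n" for i
      using g(2)[OF that] by (simp add: image_image f_def comp_def)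
    moreover have "map (\<lambda>i. (i, g i (snd (Xs ! i)))) [0..<?n] = map (\<lambda>i. (i, snd (Ys ! i))) [0..<?n]"
      using g(3) by simp
    ultimately show "snd (concat_s R Ys) S = map f ` snd (concat_s R Xs) S"
      using len by (simp add: concat_tuples image_Un image_UN f_def comp_def del: map_eq_conv)
  next
    show "f (j, snd (Xs ! j)) = (j, snd (Ys ! j))"
      using g(3)[OF j] by (simp add: f_def)
  qed
qed

lemma tree_riso_concat_branches:
  assumes T: "is_tree ar A" and tin: "t \<in> snd A R" and j: "j < length t"
  shows "riso (A, t ! j) (concat_s R (map (\<lambda>i. (branch A R t (t ! i), t ! i)) [0..<length t]), (j, t ! j))"
proof -
  let ?n = "length t" and ?B = "\<lambda>i. branch A R t (t ! i)"
  have W: "wf_struct ar A"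
    using T by (simp add: is_tree_def is_forest_def)
  have B_sub: "fst (?B i) \<subseteq> fst A" if "i < ?n" for i
    using W wf_struct_tuple_nth[OF W tin that] by (rule branch_vertices_subset)
  define c where "c v = (THE i. i < ?n \<and> v \<in> fst (?B i))" for v
  have c: "c v = i" if "i < ?n" "v \<in> fst (?B i)" for i v
    unfolding c_def
  proof (rule the1_equality)
    show "\<exists>!i. i < ?n \<and> v \<in> fst (?B i)"
      using tree_vertex_in_unique_branch[OF T tin] B_sub that by blast
  qed (use that in simp)
  define f where "f v = (c v, v)" for v
  show ?thesis
    unfolding riso_def fst_conv snd_conv
  proof (intro exI[of _ f] conjI allI)
    have "f ` fst A = (\<Union>i<?n. Pair i ` fst (?B i))"
    proof (intro equalityI subsetI)
      fix z assume "z \<in> f ` fst A"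
      then obtain v where v: "v \<in> fst A" "z = f v" by blast
      then obtain i where "i < ?n" "v \<in> fst (?B i)"
        using tree_vertex_in_unique_branch[OF T tin] by blast
      with v show "z \<in> (\<Union>i<?n. Pair i ` fst (?B i))"
        by (auto simp: f_def c)
    next
      fix z assume "z \<in> (\<Union>i<?n. Pair i ` fst (?B i))"
      then obtain i v where iv: "i < ?n" "v \<in> fst (?B i)" "z = (i, v)" by blast
      then have "z = f v" "v \<in> fst A"
        using c B_sub by (auto simp: f_def)
      then show "z \<in> f ` fst A" by blast
    qed
    moreover have "inj_on f (fst A)"
      by (simp add: inj_on_def f_def)
    ultimately show "bij_betw f (fst A) (fst (concat_s R (map (\<lambda>i. (?B i, t ! i)) [0..<?n])))"
      by (simp add: bij_betw_def concat_vertices)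
  next
    fix S
    have "map f s = map (Pair i) s" if "i < ?n" "s \<in> snd (?B i) S" for i s
      using c[OF that(1)] branch_tuple_vertices[OF that(2)] by (simp add: f_def)
    then have "map f ` snd (?B i) S = map (Pair i) ` snd (?B i) S" if "i < ?n" for i
      using that by (meson image_cong)
    moreover have "map f t = map (\<lambda>i. (i, snd (map (\<lambda>i. (?B i, t ! i)) [0..<?n] ! i))) [0..<?n]"
      by (rule nth_equalityI) (simp_all add: f_def c root_in_branch)
    ultimately show "snd (concat_s R (map (\<lambda>i. (?B i, t ! i)) [0..<?n])) S = map f ` snd A S"
      by (subst tree_tuples_decompose[OF T tin]) (simp add: concat_tuples image_Un image_UN)
  next
    show "f (t ! j) = (j, t ! j)"
      using c[OF j root_in_branch] by (simp add: f_def)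
  qed
qed

lemma tree_without_tuples_riso_T0:
  assumes T: "is_tree ar A" and empty: "\<And>S. snd A S = {}" and a: "a \<in> fst A"
  shows "riso (A, a) T0"
proof -
  have no_adj: "\<not> inc_adj A u w" for u w
    using empty by (simp add: inc_adj_def)
  have "v = a" if "v \<in> fst A" for v
  proof -
    have "(inc_adj A)\<^sup>*\<^sup>* (Inl a) (Inl v)"
      using T a that by (intro inc_connected_rtranclp) (auto simp: is_tree_def inc_nodes_def)
    then show ?thesis
      using no_adj by (auto elim: converse_rtranclpE)
  qed
  then have "fst A = {a}"
    using a by blast
  then show ?thesis
    unfolding riso_def T0_def using empty by (auto simp: bij_betw_def)
qed

lemma tree_vertex_in_tuple:
  assumes T: "is_tree ar A" and s: "s \<in> snd A S" and a: "a \<in> fst A"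
  obtains R t j where "t \<in> snd A R" "j < length t" "t ! j = a"
proof -
  have "(inc_adj A)\<^sup>*\<^sup>* (Inl a) (Inr (S, s))"
    using T s a by (intro inc_connected_rtranclp) (auto simp: is_tree_def inc_nodes_def)
  then obtain y where "inc_adj A (Inl a) y"
    by (rule converse_rtranclpE) auto
  then show ?thesis
    using that by (auto simp: inc_adj_def in_set_conv_nth)
qed

lemma branch_fewer_tuples:
  fixes A :: "('a, 'r::finite) struct"
  assumes "wf_struct ar A" "t \<in> snd A R"
  shows "card (Sigma UNIV (snd (branch A R t x))) < card (Sigma UNIV (snd A))"
proof (rule psubset_card_mono)
  show "finite (Sigma UNIV (snd A))"
    using assms(1) by (simp add: wf_struct_def finite_SigmaI)
  show "Sigma UNIV (snd (branch A R t x)) \<subset> Sigma UNIV (snd A)"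
    using branch_tuples_subset[of A R t x] block_not_in_branch[of t A R x] assms(2) by blast
qed

lemma hom_substruct:
  "hom A C f \<Longrightarrow> fst B \<subseteq> fst A \<Longrightarrow> (\<And>S. snd B S \<subseteq> snd A S) \<Longrightarrow> hom B C f"
  unfolding hom_def by blast

lemma riso_mem_iso_trans [trans]: "riso X Y \<Longrightarrow> mem_iso Y F \<Longrightarrow> mem_iso X F"
  unfolding mem_iso_def using riso_trans by blast

lemma hom_Dstr_T0: "hom A (Dstr ar Ob) \<phi> \<Longrightarrow> a \<in> fst A \<Longrightarrow> T0 \<in> \<phi> a"
  unfolding hom_def Dstr_def D_vertex_def by auto

lemma hom_Dstr_concat:
  assumes "hom A (Dstr ar Ob) \<phi>" "t \<in> snd A R"
    and "length Ys = length t" "\<And>i. i < length t \<Longrightarrow> Ys ! i \<in> \<phi> (t ! i)" "j < length t"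
  shows "mem_iso (concat_s R Ys, (j, snd (Ys ! j))) (\<phi> (t ! j))"
proof -
  have "D_rel ar Ob R (map \<phi> t)"
    using assms(1,2) by (auto simp: hom_def Dstr_def)
  then show ?thesis
    using assms(3-5) unfolding D_rel_def by simp
qed

lemma tree_hom_Dstr_mem_iso:
  fixes A :: "('a, 'r::finite) struct"
  assumes "is_tree ar A" "hom A (Dstr ar Ob) \<phi>" "a \<in> fst A"
  shows "mem_iso (A, a) (\<phi> a)"
  using assms
proof (induction "card (Sigma UNIV (snd A))" arbitrary: A a rule: less_induct)
  case less
  note T = less.prems(1) and H = less.prems(2) and a = less.prems(3)
  have W: "wf_struct ar A"
    using T by (simp add: is_tree_def is_forest_def)
  show ?case
  proof (cases "\<forall>S. snd A S = {}")
    case True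
    then have "riso (A, a) T0"
      using T a by (blast intro: tree_without_tuples_riso_T0)
    then show ?thesis
      using hom_Dstr_T0[OF H a] unfolding mem_iso_def by blast
  next
    case False
    then obtain R t j where tin: "t \<in> snd A R" and j: "j < length t" "t ! j = a"
      using tree_vertex_in_tuple[OF T _ a] by blast
    let ?B = "\<lambda>i. branch A R t (t ! i)"
    have "mem_iso (?B i, t ! i) (\<phi> (t ! i))" if i: "i < length t" for i
    proof (rule less.hyps)
      have tiA: "t ! i \<in> fst A"
        using wf_struct_tuple_nth[OF W tin i] .
      show "card (Sigma UNIV (snd (?B i))) < card (Sigma UNIV (snd A))"
        using branch_fewer_tuples[OF W tin] .
      show "is_tree ar (?B i)"
        using branch_is_tree[OF T tiA] .
      show "hom (?B i) (Dstr ar Ob) \<phi>"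
        using H branch_vertices_subset[OF W tiA] branch_tuples_subset by (rule hom_substruct)
    qed (rule root_in_branch)
    then obtain Y where Y: "\<And>i. i < length t \<Longrightarrow> Y i \<in> \<phi> (t ! i) \<and> riso (?B i, t ! i) (Y i)"
      unfolding mem_iso_def by metis
    define Ys where "Ys = map Y [0..<length t]"
    have "riso (A, a) (concat_s R (map (\<lambda>i. (?B i, t ! i)) [0..<length t]), (j, t ! j))"
      using tree_riso_concat_branches[OF T tin j(1)] j(2) by simp
    also have "riso \<dots> (concat_s R Ys, (j, snd (Ys ! j)))"
      using concat_riso_cong[of Ys "map (\<lambda>i. (?B i, t ! i)) [0..<length t]"] Y j(1)
      by (simp add: Ys_def)
    also have "mem_iso \<dots> (\<phi> a)"
      using hom_Dstr_concat[OF H tin, of Ys j] Y j by (simp add: Ys_def)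
    finally show ?thesis .
  qed
qed

theorem lemma4p2:
  fixes ar :: "'r::finite \<Rightarrow> nat"
    and Ob :: "(nat, 'r) struct set"
    and A :: "('a, 'r) struct"
    and \<phi> :: "'a \<Rightarrow> ((nat, 'r) struct \<times> nat) set"
  assumes "\<forall>B \<in> Ob. is_tree ar B"
    and "regular ar Ob"
    and "is_tree ar A"
    and "hom A (Dstr ar Ob) \<phi>"
    and "a \<in> fst A"
  shows "mem_iso (A, a) (\<phi> a)"
  using tree_hom_Dstr_mem_iso[OF assms(3-5)] .

end
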